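(* $h_\omega(w)=\frac w4+O(w^{3/4})$; that is, there exist constants $C>0$ and $w_0\ge1$ such that $h_\omega(w)\le\frac w4+Cw^{3/4}$ for all real $w\ge w_0$.
   Context: A weighted digraph $D=(V,A,w_D)$ is a digraph without loops or parallel arcs (opposite arcs allowed) with weights $w_D:A\to\mathbb{R}_{\ge0}$; $w(D)$ is its total arc weight. For a partition $(X,Y)$ of $V$, the dicut $(X,Y)$ consists of the arcs from $X$ to $Y$, and its weight is their total weight. $\mathcal{D}_\omega(w)$ is the set of weighted digraphs $D$ in which every arc has weight at least $1$ and $w(D)=w$. For real $w\ge1$, $h_\omega(w)$ is the supremum of reals $g$ such that every acyclic $D\in\mathcal{D}_\omega(w)$ has a dicut of weight at least $g$. *)

theory Defs
  imports Complex_Main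
begin

text \<open>A weighted digraph on a finite vertex set V (vertices drawn from nat; every finite
digraph is isomorphic to one of these), arc set A \<subseteq> V \<times> V without loops
(opposite arcs allowed, no parallel arcs since A is a set), nonnegative weights.\<close>

definition weighted_digraph :: "nat set \<Rightarrow> (nat \<times> nat) set \<Rightarrow> (nat \<times> nat \<Rightarrow> real) \<Rightarrow> bool" where
  "weighted_digraph V A wt \<longleftrightarrow> finite V \<and> A \<subseteq> V \<times> V \<and> (\<forall>(u,v)\<in>A. u \<noteq> v) \<and> (\<forall>a\<in>A. wt a \<ge> 0)"

definition total_weight :: "(nat \<times> nat) set \<Rightarrow> (nat \<times> nat \<Rightarrow> real) \<Rightarrow> real" where
  "total_weight A wt = (\<Sum>a\<in>A. wt a)"

definition in_D_omega :: "real \<Rightarrow> nat set \<Rightarrow> (nat \<times> nat) set \<Rightarrow> (nat \<times> nat \<Rightarrow> real) \<Rightarrow> bool" where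
  "in_D_omega w V A wt \<longleftrightarrow> weighted_digraph V A wt \<and> (\<forall>a\<in>A. wt a \<ge> 1) \<and> total_weight A wt = w"

definition dicut_weight :: "(nat \<times> nat) set \<Rightarrow> (nat \<times> nat \<Rightarrow> real) \<Rightarrow> nat set \<Rightarrow> nat set \<Rightarrow> real" where
  "dicut_weight A wt X Y = (\<Sum>a\<in>{(u,v)\<in>A. u \<in> X \<and> v \<in> Y}. wt a)"

definition h_omega :: "real \<Rightarrow> real" where
  "h_omega w = Sup {g. \<forall>V A wt. in_D_omega w V A wt \<and> acyclic A \<longrightarrow>
      (\<exists>X Y. X \<union> Y = V \<and> X \<inter> Y = {} \<and> dicut_weight A wt X Y \<ge> g)}"

end

theory Submission
  imports Defs
begin

text \<open>The upper bound comes from overlapping transitive tournaments. Place a copy of the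
transitive tournament on \<open>K\<close> consecutive vertices at each of the starting points
\<open>0, \<dots>, N - 1\<close> and weight every arc by \<open>l\<close> times the number of copies containing it,
so that \<open>w = l N K (K - 1) / 2\<close> with \<open>1 \<le> l \<le> 2\<close>. For a vertex set \<open>X\<close> with indicator
\<open>x\<close>, twice the forward cut inside one window is at most \<open>K\<^sup>2 / 4\<close> plus the linear term
\<open>\<Sum>u. x (t + u) (K - 1 - 2u)\<close>. Summed over all windows these linear terms contribute at most
\<open>K\<^sup>3\<close>, because their weights sum to zero and sliding the window by one changes
\<open>\<Sum>t. x (t + u)\<close> by at most one. Hence every dicut weighs at most
\<open>w / 4 + w / (4 (K - 1)) + K\<^sup>3\<close>, which is \<open>w / 4 + O(w powr (3/4))\<close> for \<open>K \<approx> w powr (1/4)\<close>.\<close>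

lemma sum_UNION_multiplicity:
  fixes f :: "'a \<Rightarrow> 'b::comm_semiring_1"
  assumes "finite I" and "\<And>i. i \<in> I \<Longrightarrow> finite (B i)"
  shows "(\<Sum>a\<in>(\<Union>i\<in>I. B i). of_nat (card {i\<in>I. a \<in> B i}) * f a) = (\<Sum>i\<in>I. \<Sum>a\<in>B i. f a)"
proof -
  let ?U = "\<Union>i\<in>I. B i"
  have "(\<Sum>a\<in>?U. of_nat (card {i\<in>I. a \<in> B i}) * f a) = (\<Sum>a\<in>?U. \<Sum>i\<in>I. if a \<in> B i then f a else 0)"
    using assms(1) by (simp add: sum.If_cases Int_def)
  also have "\<dots> = (\<Sum>i\<in>I. \<Sum>a\<in>?U. if a \<in> B i then f a else 0)"
    by (rule sum.swap)
  also have "\<dots> = (\<Sum>i\<in>I. \<Sum>a\<in>B i. f a)"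
  proof (rule sum.cong[OF refl])
    fix i assume "i \<in> I"
    then have "?U \<inter> B i = B i" by blast
    then show "(\<Sum>a\<in>?U. if a \<in> B i then f a else 0) = (\<Sum>a\<in>B i. f a)"
      using assms by (simp add: sum.inter_restrict[symmetric])
  qed
  finally show ?thesis .
qed

lemma h_omega_le_dicut_bound:
  assumes "in_D_omega w V A wt" and "acyclic A"
    and "\<And>X Y. X \<union> Y = V \<Longrightarrow> X \<inter> Y = {} \<Longrightarrow> dicut_weight A wt X Y \<le> B"
  shows "h_omega w \<le> B"
proof -
  define G where "G = {g. \<forall>V A wt. in_D_omega w V A wt \<and> acyclic A \<longrightarrow>
      (\<exists>X Y. X \<union> Y = V \<and> X \<inter> Y = {} \<and> dicut_weight A wt X Y \<ge> g)}"
  have "0 \<in> G"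
    unfolding G_def
  proof (intro CollectI allI impI)
    fix V' A' wt'
    have "dicut_weight A' wt' V' {} = 0" by (simp add: dicut_weight_def)
    then show "\<exists>X Y. X \<union> Y = V' \<and> X \<inter> Y = {} \<and> 0 \<le> dicut_weight A' wt' X Y"
      by (intro exI[of _ V'] exI[of _ "{}"]) simp
  qed
  moreover have "g \<le> B" if "g \<in> G" for g
  proof -
    obtain X Y where "X \<union> Y = V" "X \<inter> Y = {}" "g \<le> dicut_weight A wt X Y"
      using \<open>g \<in> G\<close> assms(1,2) unfolding G_def by blast
    then show ?thesis using assms(3)[of X Y] by linarith
  qed
  ultimately have "Sup G \<le> B" by (intro cSup_least) auto
  then show ?thesis unfolding h_omega_def G_def .
qed

lemma nat_multiple_scaling:
  fixes a b :: real
  assumes "0 < b" and "b \<le> a"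
  obtains N :: nat and l where "1 \<le> l" and "l \<le> 2" and "a = l * real N * b"
proof
  define N where "N = nat \<lfloor>a / b\<rfloor>"
  have "1 \<le> a / b" using assms by simp
  then have N: "1 \<le> real N" "real N \<le> a / b" "a / b < real N + 1"
    unfolding N_def by auto
  have "real N * b \<le> a" "a < (real N + 1) * b"
    using N assms by (simp_all add: field_simps)
  moreover have "(real N + 1) * b \<le> 2 * (real N * b)"
    using N assms by (simp add: algebra_simps)
  ultimately have Nb: "real N * b \<le> a" "a < 2 * (real N * b)" by linarith+
  show "1 \<le> a / (real N * b)" "a / (real N * b) \<le> 2" "a = a / (real N * b) * real N * b"
    using Nb N assms by (simp_all add: field_simps)
qed

lemma sum_if_less_right:
  "(\<Sum>v<K. if u < v then c else 0) = (c::'a::comm_semiring_1) * of_nat (K - Suc u)"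
proof -
  have "{v\<in>{..<K}. u < v} = {Suc u..<K}" by auto
  then show ?thesis by (simp add: sum.If_cases Int_def mult.commute)
qed

lemma sum_if_less_left:
  "(\<Sum>u<K. if u < v then c else 0) = (c::'a::comm_semiring_1) * of_nat (min v K)"
proof -
  have "{u\<in>{..<K}. u < v} = {..<min v K}" by auto
  then show ?thesis by (simp add: sum.If_cases Int_def mult.commute)
qed

lemma forward_pairs_le:
  fixes y :: "nat \<Rightarrow> real"
  assumes y: "\<And>u. 0 \<le> y u \<and> y u \<le> 1"
  shows "2 * (\<Sum>u<K. \<Sum>v<K. if u < v then y u * (1 - y v) else 0)
           \<le> real K ^ 2 / 4 + (\<Sum>u<K. y u * (real K - 1 - 2 * real u))"
proof -
  define F where "F = (\<Sum>u<K. \<Sum>v<K. if u < v then y u * (1 - y v) else 0)"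
  define G where "G = (\<Sum>u<K. \<Sum>v<K. if v < u then y u * (1 - y v) else 0)"
  define S where "S = (\<Sum>u<K. y u)"
  \<comment> \<open>\<open>F + G\<close> is at most \<open>S (K - S) \<le> K\<^sup>2 / 4\<close>, while \<open>F - G\<close> is linear in \<open>y\<close>.\<close>
  have "(if u < v then y u * (1 - y v) else 0) + (if v < u then y u * (1 - y v) else 0)
          \<le> y u * (1 - y v)" for u v
    using y[of u] y[of v] by (cases u v rule: linorder_cases) auto
  then have "F + G \<le> (\<Sum>u<K. \<Sum>v<K. y u * (1 - y v))"
    unfolding F_def G_def sum.distrib[symmetric] by (intro sum_mono)
  also have "\<dots> = S * (real K - S)"
    by (simp add: S_def sum_subtractf flip: sum_distrib_left sum_distrib_right)
  also have "\<dots> \<le> real K ^ 2 / 4"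
    using zero_le_power2[of "real K - 2 * S"] by (simp add: power2_eq_square algebra_simps)
  finally have "F + G \<le> real K ^ 2 / 4" .
  have G_swap: "G = (\<Sum>u<K. \<Sum>v<K. if u < v then y v * (1 - y u) else 0)"
    unfolding G_def by (rule sum.swap)
  have sum_first_endpoints: "(\<Sum>u<K. \<Sum>v<K. if u < v then y u else 0) = (\<Sum>u<K. y u * (real K - 1 - real u))"
    by (intro sum.cong refl) (simp add: sum_if_less_right of_nat_diff)
  have "(\<Sum>u<K. \<Sum>v<K. if u < v then y v else 0) = (\<Sum>v<K. \<Sum>u<K. if u < v then y v else 0)"
    by (rule sum.swap)
  also have "\<dots> = (\<Sum>u<K. y u * real u)"
    by (intro sum.cong refl) (simp add: sum_if_less_left)
  finally have sum_second_endpoints: "(\<Sum>u<K. \<Sum>v<K. if u < v then y v else 0) = (\<Sum>u<K. y u * real u)" .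
  have "F - G = (\<Sum>u<K. \<Sum>v<K. (if u < v then y u else 0) - (if u < v then y v else 0))"
    unfolding F_def G_swap sum_subtractf[symmetric] by (intro sum.cong refl) (simp add: algebra_simps)
  also have "\<dots> = (\<Sum>u<K. y u * (real K - 1 - real u)) - (\<Sum>u<K. y u * real u)"
    by (simp only: sum_subtractf sum_first_endpoints sum_second_endpoints)
  also have "\<dots> = (\<Sum>u<K. y u * (real K - 1 - 2 * real u))"
    unfolding sum_subtractf[symmetric] by (intro sum.cong refl) (simp add: algebra_simps)
  finally show ?thesis
    using \<open>F + G \<le> real K ^ 2 / 4\<close> unfolding F_def by linarith
qed

lemma sum_lessThan_real: "(\<Sum>u<K. real u) = real K * (real K - 1) / 2"
  by (induction K) (simp_all add: field_simps)

lemma sum_centered_weights: "(\<Sum>u<K. real K - 1 - 2 * real u) = 0"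
  by (simp add: sum_subtractf sum_lessThan_real flip: sum_distrib_left)

lemma sliding_window_sum_le:
  fixes x :: "nat \<Rightarrow> real"
  assumes x: "\<And>i. 0 \<le> x i \<and> x i \<le> 1"
  shows "(\<Sum>t<N. \<Sum>u<K. x (t + u) * (real K - 1 - 2 * real u)) \<le> real K ^ 3"
proof -
  define S where "S u = (\<Sum>t<N. x (t + u))" for u
  have S_shift: "\<bar>S u - S 0\<bar> \<le> real u" for u
  proof (induction u)
    case (Suc u)
    have "S (Suc u) - S u = x (N + u) - x u"
      unfolding S_def sum_subtractf[symmetric]
      using sum_lessThan_telescope[where f = "\<lambda>t. x (t + u)"] by simp
    then have "\<bar>S (Suc u) - S u\<bar> \<le> 1"
      using x[of "N + u"] x[of u] by (simp add: abs_le_iff)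
    with Suc show ?case by simp
  qed simp
  have "(\<Sum>t<N. \<Sum>u<K. x (t + u) * (real K - 1 - 2 * real u))
      = (\<Sum>u<K. (real K - 1 - 2 * real u) * S u)"
    unfolding S_def sum_distrib_left by (subst sum.swap) (simp add: mult.commute)
  \<comment> \<open>The weights sum to zero, so \<open>S u\<close> may be replaced by \<open>S u - S 0\<close>, which is at most \<open>u\<close> in absolute value.\<close>
  also have "\<dots> = (\<Sum>u<K. (real K - 1 - 2 * real u) * (S u - S 0))"
    using sum_centered_weights[of K]
    by (simp add: right_diff_distrib sum_subtractf flip: sum_distrib_right)
  also have "\<dots> \<le> (\<Sum>u<K. real K * real K)"
  proof (rule sum_mono)
    fix u assume "u \<in> {..<K}"
    then have "\<bar>real K - 1 - 2 * real u\<bar> \<le> real K" and "\<bar>S u - S 0\<bar> \<le> real K"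
      using S_shift[of u] by auto
    then have "\<bar>(real K - 1 - 2 * real u) * (S u - S 0)\<bar> \<le> real K * real K"
      unfolding abs_mult by (rule mult_mono) auto
    then show "(real K - 1 - 2 * real u) * (S u - S 0) \<le> real K * real K"
      by linarith
  qed
  also have "\<dots> = real K ^ 3"
    by (simp add: power3_eq_cube)
  finally show ?thesis .
qed

definition transitive_tournament :: "nat \<Rightarrow> (nat \<times> nat) set" where
  "transitive_tournament K = {(u, v). u < v \<and> v < K}"

definition shift_pair :: "nat \<Rightarrow> nat \<times> nat \<Rightarrow> nat \<times> nat" where
  "shift_pair t p = (t + fst p, t + snd p)"

definition tournament_copy :: "nat \<Rightarrow> nat \<Rightarrow> (nat \<times> nat) set" where
  "tournament_copy K t = shift_pair t ` transitive_tournament K"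

definition stacked_tournaments :: "nat \<Rightarrow> nat \<Rightarrow> (nat \<times> nat) set" where
  "stacked_tournaments N K = (\<Union>t<N. tournament_copy K t)"

definition stacked_multiplicity :: "nat \<Rightarrow> nat \<Rightarrow> nat \<times> nat \<Rightarrow> real" where
  "stacked_multiplicity N K a = real (card {t \<in> {..<N}. a \<in> tournament_copy K t})"

lemma finite_transitive_tournament: "finite (transitive_tournament K)"
  by (rule finite_subset[of _ "{..<K} \<times> {..<K}"]) (auto simp: transitive_tournament_def)

lemma sum_transitive_tournament:
  "(\<Sum>p\<in>transitive_tournament K. g p) = (\<Sum>u<K. \<Sum>v<K. if u < v then g (u, v) else 0)"
proof -
  have "transitive_tournament K = {p \<in> {..<K} \<times> {..<K}. fst p < snd p}"
    by (auto simp: transitive_tournament_def)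
  then have "(\<Sum>p\<in>transitive_tournament K. g p) = (\<Sum>p\<in>{..<K} \<times> {..<K}. if fst p < snd p then g p else 0)"
    by (simp add: sum.inter_filter)
  also have "\<dots> = (\<Sum>u<K. \<Sum>v<K. if u < v then g (u, v) else 0)"
    by (auto simp: sum.cartesian_product split_def intro!: sum.cong)
  finally show ?thesis .
qed

lemma card_transitive_tournament:
  "real (card (transitive_tournament K)) = real K * (real K - 1) / 2"
proof -
  have "real (card (transitive_tournament K)) = (\<Sum>u<K. \<Sum>v<K. if u < v then 1 else 0)"
    using sum_transitive_tournament[of "\<lambda>_. 1::real" K] by simp
  also have "\<dots> = (\<Sum>v<K. \<Sum>u<K. if u < v then 1 else 0)"
    by (rule sum.swap)
  also have "\<dots> = (\<Sum>v<K. real v)"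
    by (intro sum.cong refl) (simp add: sum_if_less_left)
  also have "\<dots> = real K * (real K - 1) / 2"
    by (rule sum_lessThan_real)
  finally show ?thesis .
qed

lemma stacked_tournaments_less:
  "a \<in> stacked_tournaments N K \<Longrightarrow> fst a < snd a \<and> snd a < N + K"
  by (auto simp: stacked_tournaments_def tournament_copy_def shift_pair_def transitive_tournament_def)

lemma acyclic_stacked_tournaments: "acyclic (stacked_tournaments N K)"
proof (rule wf_acyclic)
  have "stacked_tournaments N K \<subseteq> less_than"
    using stacked_tournaments_less by fastforce
  then show "wf (stacked_tournaments N K)"
    using wf_less_than wf_subset by blast
qed

lemma finite_stacked_tournaments: "finite (stacked_tournaments N K)"
  by (simp add: stacked_tournaments_def tournament_copy_def finite_transitive_tournament)

lemma stacked_multiplicity_ge_1: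
  assumes "a \<in> stacked_tournaments N K"
  shows "stacked_multiplicity N K a \<ge> 1"
proof -
  have "{t \<in> {..<N}. a \<in> tournament_copy K t} \<noteq> {}"
    using assms by (auto simp: stacked_tournaments_def)
  then show ?thesis
    by (simp add: stacked_multiplicity_def Suc_le_eq card_gt_0_iff)
qed

lemma sum_stacked_multiplicity:
  "(\<Sum>a\<in>stacked_tournaments N K. stacked_multiplicity N K a * f a)
     = (\<Sum>t<N. \<Sum>p\<in>transitive_tournament K. f (shift_pair t p))"
proof -
  have "inj_on (shift_pair t) S" for t S
    by (auto simp: inj_on_def shift_pair_def prod_eq_iff)
  then show ?thesis
    using sum_UNION_multiplicity[of "{..<N}" "tournament_copy K" f]
    by (simp add: stacked_tournaments_def stacked_multiplicity_def tournament_copy_def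
        finite_transitive_tournament sum.reindex)
qed

lemma sliding_forward_pairs_le:
  fixes x :: "nat \<Rightarrow> real"
  assumes x: "\<And>i. 0 \<le> x i \<and> x i \<le> 1"
  shows "(\<Sum>t<N. \<Sum>u<K. \<Sum>v<K. if u < v then x (t + u) * (1 - x (t + v)) else 0)
           \<le> real N * real K ^ 2 / 8 + real K ^ 3 / 2"
proof -
  define W where "W t = (\<Sum>u<K. \<Sum>v<K. if u < v then x (t + u) * (1 - x (t + v)) else 0)" for t
  have "2 * W t \<le> real K ^ 2 / 4 + (\<Sum>u<K. x (t + u) * (real K - 1 - 2 * real u))" for t
    unfolding W_def by (rule forward_pairs_le) (use x in auto)
  then have "2 * (\<Sum>t<N. W t) \<le> (\<Sum>t<N. real K ^ 2 / 4 + (\<Sum>u<K. x (t + u) * (real K - 1 - 2 * real u)))"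
    unfolding sum_distrib_left by (rule sum_mono)
  also have "\<dots> = real N * real K ^ 2 / 4 + (\<Sum>t<N. \<Sum>u<K. x (t + u) * (real K - 1 - 2 * real u))"
    by (simp add: sum.distrib)
  also have "\<dots> \<le> real N * real K ^ 2 / 4 + real K ^ 3"
    using sliding_window_sum_le[OF x] by simp
  finally show ?thesis unfolding W_def by simp
qed

lemma dicut_stacked_tournaments_le:
  assumes "0 \<le> l" and XY: "X \<union> Y = {..<N + K}" "X \<inter> Y = {}"
  shows "dicut_weight (stacked_tournaments N K) (\<lambda>a. l * stacked_multiplicity N K a) X Y
           \<le> l * (real N * real K ^ 2 / 8 + real K ^ 3 / 2)"
proof -
  define x where "x i = (if i \<in> X then 1 else 0 :: real)" for i
  have "dicut_weight (stacked_tournaments N K) (\<lambda>a. l * stacked_multiplicity N K a) X Y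
      = (\<Sum>a\<in>stacked_tournaments N K. if fst a \<in> X \<and> snd a \<in> Y then l * stacked_multiplicity N K a else 0)"
    unfolding dicut_weight_def using finite_stacked_tournaments
    by (subst sum.inter_filter[symmetric]) (auto simp: case_prod_beta intro!: sum.cong)
  also have "\<dots> = l * (\<Sum>a\<in>stacked_tournaments N K. stacked_multiplicity N K a * (x (fst a) * (1 - x (snd a))))"
    unfolding sum_distrib_left
  proof (intro sum.cong refl)
    fix a assume "a \<in> stacked_tournaments N K"
    then have "snd a \<in> X \<union> Y" using stacked_tournaments_less XY(1) by auto
    then show "(if fst a \<in> X \<and> snd a \<in> Y then l * stacked_multiplicity N K a else 0)
        = l * (stacked_multiplicity N K a * (x (fst a) * (1 - x (snd a))))"
      using XY(2) by (auto simp: x_def)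
  qed
  also have "\<dots> = l * (\<Sum>t<N. \<Sum>u<K. \<Sum>v<K. if u < v then x (t + u) * (1 - x (t + v)) else 0)"
    by (simp add: sum_stacked_multiplicity sum_transitive_tournament shift_pair_def cong: if_cong)
  also have "\<dots> \<le> l * (real N * real K ^ 2 / 8 + real K ^ 3 / 2)"
    by (intro mult_left_mono sliding_forward_pairs_le \<open>0 \<le> l\<close>) (simp add: x_def)
  finally show ?thesis .
qed

lemma h_omega_stacked_tournaments_le:
  assumes "1 \<le> l" and w: "w = l * real N * (real K * (real K - 1) / 2)"
  shows "h_omega w \<le> l * (real N * real K ^ 2 / 8 + real K ^ 3 / 2)"
proof (rule h_omega_le_dicut_bound)
  let ?wt = "\<lambda>a. l * stacked_multiplicity N K a"
  have "?wt a \<ge> 1" if "a \<in> stacked_tournaments N K" for a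
    using stacked_multiplicity_ge_1[OF that] \<open>1 \<le> l\<close> by (metis mult_mono' mult_1 zero_le_one)
  moreover have "total_weight (stacked_tournaments N K) ?wt = w"
    using sum_stacked_multiplicity[of N K "\<lambda>_. 1"] card_transitive_tournament[of K]
    by (simp add: total_weight_def w flip: sum_distrib_left)
  ultimately show "in_D_omega w {..<N + K} (stacked_tournaments N K) ?wt"
    using stacked_tournaments_less
    by (fastforce simp: in_D_omega_def weighted_digraph_def)
  show "acyclic (stacked_tournaments N K)"
    by (rule acyclic_stacked_tournaments)
  show "dicut_weight (stacked_tournaments N K) ?wt X Y \<le> l * (real N * real K ^ 2 / 8 + real K ^ 3 / 2)"
    if "X \<union> Y = {..<N + K}" "X \<inter> Y = {}" for X Y
    using dicut_stacked_tournaments_le[OF _ that] \<open>1 \<le> l\<close> by simp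
qed

lemma h_omega_le:
  fixes w :: real
  assumes "16 \<le> w"
  shows "h_omega w \<le> w / 4 + 2 * w powr (3 / 4)"
proof -
  define q where "q = w powr (1 / 4)"
  have "0 < w" using assms by simp
  then have q4: "q ^ 4 = w" and q3: "w powr (3 / 4) = q ^ 3"
    by (simp_all add: q_def powr_powr flip: powr_realpow)
  have "2 \<le> q"
  proof (rule ccontr)
    assume "\<not> 2 \<le> q"
    then have "q ^ 4 < 2 ^ 4" using \<open>0 < w\<close> by (intro power_strict_mono) (auto simp: q_def)
    with q4 assms show False by simp
  qed
  define K where "K = nat \<lfloor>q\<rfloor>"
  have "2 \<le> \<lfloor>q\<rfloor>"
    using \<open>2 \<le> q\<close> by (simp add: le_floor_iff)
  then have K: "real K \<le> q" "q < real K + 1" "2 \<le> real K"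
    unfolding K_def by linarith+
  define s where "s = real K * (real K - 1) / 2"
  have "0 < s" using K by (simp add: s_def)
  have "s \<le> real K * real K"
    using K by (simp add: s_def field_simps)
  also have "\<dots> \<le> q ^ 2"
    using K mult_mono[OF K(1) K(1)] by (simp add: power2_eq_square)
  also have "\<dots> \<le> w"
    using \<open>2 \<le> q\<close> q4 power_increasing[of 2 4 q] by simp
  finally obtain N l where "1 \<le> l" "l \<le> 2" and w: "w = l * real N * s"
    using nat_multiple_scaling \<open>0 < s\<close> by metis
  have "h_omega w \<le> l * (real N * real K ^ 2 / 8 + real K ^ 3 / 2)"
    using h_omega_stacked_tournaments_le \<open>1 \<le> l\<close> w unfolding s_def by blast
  also have "\<dots> = w / 4 + w / (4 * (real K - 1)) + l * real K ^ 3 / 2"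
    using K by (simp add: w s_def field_simps power2_eq_square power3_eq_cube)
  also have "w / (4 * (real K - 1)) \<le> w / q"
  proof (rule divide_left_mono)
    show "q \<le> 4 * (real K - 1)" using K by (simp add: algebra_simps)
  qed (use K \<open>0 < w\<close> \<open>2 \<le> q\<close> in auto)
  also have "w / q = q ^ 3"
    using q4 \<open>2 \<le> q\<close> by (auto simp: field_simps power_numeral_reduce)
  also have "l * real K ^ 3 / 2 \<le> q ^ 3"
  proof -
    have "l * real K ^ 3 \<le> 2 * real K ^ 3"
      using \<open>l \<le> 2\<close> by (intro mult_right_mono) auto
    moreover have "real K ^ 3 \<le> q ^ 3"
      using K by (intro power_mono) auto
    ultimately show ?thesis by simp
  qed
  finally show ?thesis
    unfolding q3 by simp
qed

theorem mainTheorem11: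
  shows "\<exists>C>0. \<exists>w0\<ge>1. \<forall>w::real. w \<ge> w0 \<longrightarrow> h_omega w \<le> w / 4 + C * w powr (3/4)"
  using h_omega_le by (intro exI[of _ 2] conjI exI[of _ 16]) auto

end
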